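(* Consider the noiseless least squares deterministic dynamics with exact line search described in the context. Then \[ \frac{\lambda_{\min}(K)}{\frac1d\mathrm{Tr}(K^2)}\le\gamma_t^{\mathrm{line}}\quad\text{for all }t\ge0. \] Moreover, suppose $K$ has only two distinct eigenvalues $\lambda_1>\lambda_2>0$, with $d/2$ eigenvalues equal to $\lambda_1$ and $d/2$ equal to $\lambda_2$. Then $\lim_{t\to\infty}\gamma_t^{\mathrm{line}}$ exists and \[ \frac{\lambda_{\min}(K)}{\frac1d\mathrm{Tr}(K^2)}\le\lim_{t\to\infty}\gamma_t^{\mathrm{line}}\le\frac{2\lambda_{\min}(K)}{\frac1d\mathrm{Tr}(K^2)}. \]
   Context: Noiseless least squares: $\mathcal R(X)=\frac12(X-X^\star)^TK(X-X^\star)$ with $K\in\mathbb R^{d\times d}$ symmetric positive definite with eigenpairs $(\lambda_i,\omega_i)$. Its deterministic equivalent dynamics under a learning-rate curve $\gamma_t$: functions $D_i^2(t)\ge0$ with $D_i^2(0)=d\langle X_0-X^\star,\omega_i\rangle^2$ solving $\frac{d}{dt}D_i^2(t)=-2\gamma_t\lambda_iD_i^2(t)+2\gamma_t^2\lambda_iR(t)$, where $R(t)=\frac1{2d}\sum_{i=1}^d\lambda_iD_i^2(t)$. Exact line search chooses at each time $\gamma_t=\gamma_t^{\mathrm{line}}\in\arg\min_\gamma\frac{d}{dt}R(t)$, which is \[\gamma_t^{\mathrm{line}}=\frac{\sum_{i=1}^d\lambda_i^2D_i^2(t)}{2\,\mathrm{Tr}(K^2)\,R(t)}.\] *)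

theory Defs
  imports "HOL-Analysis.Analysis"
begin

definition risk_de :: "('n::finite \<Rightarrow> real) \<Rightarrow> ('n \<Rightarrow> real \<Rightarrow> real) \<Rightarrow> real \<Rightarrow> real" where
  "risk_de lam Dsq t = (1 / (2 * real CARD('n))) * (\<Sum>i\<in>UNIV. lam i * Dsq i t)"

definition gamma_line :: "real^'n^'n \<Rightarrow> ('n::finite \<Rightarrow> real) \<Rightarrow> ('n \<Rightarrow> real \<Rightarrow> real) \<Rightarrow> real \<Rightarrow> real" where
  "gamma_line K lam Dsq t = (\<Sum>i\<in>UNIV. (lam i)\<^sup>2 * Dsq i t) / (2 * trace (K ** K) * risk_de lam Dsq t)"

text \<open>Smallest eigenvalue of K, read off from the eigenpairs (lam i, omega i).\<close>
definition lambda_min :: "('n::finite \<Rightarrow> real) \<Rightarrow> real" where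
  "lambda_min lam = Min (range lam)"

end

theory Submission
  imports Defs
begin

(* With the spectral moments m_k(t) = sum_i lambda_i^k D_i^2(t) one has R = m_1 / (2d) and
   gamma^line = theta m_2 / m_1 with theta = d / Tr(K^2). The lower bound is therefore
   m_2 >= lambda_min m_1, once m_1 > 0 is known; positivity persists because gamma^line is
   bounded, so D_i^2' >= -c D_i^2 and Gronwall applies.
   With two eigenvalues b < a, m_3 = (a + b) m_2 - a b m_1, so the ratio q = m_2 / m_1, which
   stays in [b, a], solves the autonomous equation q' = theta q p(q) for a monic quadratic p
   with p(b) > 0 > p(a), p(2b). Hence p has a root r in (b, min a (2b)) and its other root lies
   beyond a, so (q - r)^2 decays exponentially and gamma^line tends to theta r, which lies
   between theta b and 2 theta b. *)

lemma DERIV_nonneg_within_imp_increasing: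
  fixes f f' :: "real \<Rightarrow> real"
  assumes f': "\<And>s. s \<ge> a \<Longrightarrow> (f has_real_derivative f' s) (at s within {a..})"
    and nonneg: "\<And>s. s \<ge> a \<Longrightarrow> f' s \<ge> 0" and "a \<le> t"
  shows "f a \<le> f t"
proof (rule DERIV_nonneg_imp_increasing_open[OF \<open>a \<le> t\<close>])
  fix s :: real assume s: "a < s" "s < t"
  have "(f has_real_derivative f' s) (at s within {a<..})"
    using s by (intro DERIV_subset[OF f'[of s]]) auto
  then have "(f has_real_derivative f' s) (at s)"
    using at_within_open[of s "{a<..}"] s by auto
  then show "\<exists>y. DERIV f s :> y \<and> y \<ge> 0" using nonneg[of s] s by auto
next
  show "continuous_on {a..t} f"
    unfolding continuous_on_eq_continuous_within
  proof
    fix s assume "s \<in> {a..t}"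
    then have "continuous (at s within {a..}) f" using DERIV_continuous[OF f'[of s]] by auto
    then show "continuous (at s within {a..t}) f"
      by (rule continuous_within_subset) auto
  qed
qed

lemma gronwall_lower_bound:
  fixes f f' :: "real \<Rightarrow> real"
  assumes f': "\<And>s. s \<ge> a \<Longrightarrow> (f has_real_derivative f' s) (at s within {a..})"
    and ge: "\<And>s. s \<ge> a \<Longrightarrow> f' s \<ge> - c * f s" and "a \<le> t"
  shows "f a * exp (- c * (t - a)) \<le> f t"
proof -
  have "f a * exp (c * a) \<le> f t * exp (c * t)"
  proof (rule DERIV_nonneg_within_imp_increasing[OF _ _ \<open>a \<le> t\<close>])
    fix s :: real assume s: "s \<ge> a"
    show "((\<lambda>s. f s * exp (c * s)) has_real_derivative (f' s + c * f s) * exp (c * s))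
        (at s within {a..})"
      by (rule derivative_eq_intros f'[OF s] refl | simp add: algebra_simps)+
    show "(f' s + c * f s) * exp (c * s) \<ge> 0" using ge[OF s] by simp
  qed
  then have "f a * exp (c * a) * exp (- c * t) \<le> f t * exp (c * t) * exp (- c * t)"
    by (rule mult_right_mono) simp
  then show ?thesis by (simp add: mult.assoc algebra_simps flip: exp_add)
qed

lemma gronwall_upper_bound:
  fixes f f' :: "real \<Rightarrow> real"
  assumes f': "\<And>s. s \<ge> a \<Longrightarrow> (f has_real_derivative f' s) (at s within {a..})"
    and le: "\<And>s. s \<ge> a \<Longrightarrow> f' s \<le> - c * f s" and "a \<le> t"
  shows "f t \<le> f a * exp (- c * (t - a))"
proof -
  have "- f a * exp (- c * (t - a)) \<le> - f t"
  proof (rule gronwall_lower_bound[where f' = "\<lambda>s. - f' s"])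
    fix s assume "a \<le> s"
    show "((\<lambda>s. - f s) has_real_derivative - f' s) (at s within {a..})"
      using f'[OF \<open>a \<le> s\<close>] by (rule DERIV_minus)
    show "- c * - f s \<le> - f' s" using le[OF \<open>a \<le> s\<close>] by simp
  qed (fact \<open>a \<le> t\<close>)
  then show ?thesis by simp
qed

lemma tendsto_of_DERIV_attracting:
  fixes q F :: "real \<Rightarrow> real"
  assumes q': "\<And>t. t \<ge> a \<Longrightarrow> (q has_real_derivative F t * (q t - x)) (at t within {a..})"
    and F: "\<And>t. t \<ge> a \<Longrightarrow> F t \<le> - c" and "c > 0"
  shows "(q \<longlongrightarrow> x) at_top"
proof -
  define V where "V t = (q t - x)\<^sup>2" for t
  have V_decay: "V t \<le> V a * exp (- (2 * c) * (t - a))" if "a \<le> t" for t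
  proof (rule gronwall_upper_bound[OF _ _ that])
    fix s assume s: "a \<le> s"
    show "(V has_real_derivative 2 * F s * V s) (at s within {a..})"
      unfolding V_def by (rule derivative_eq_intros q'[OF s] refl | simp add: power2_eq_square)+
    show "2 * F s * V s \<le> - (2 * c) * V s"
      using F[OF s] unfolding V_def by (intro mult_right_mono) auto
  qed
  have "(V \<longlongrightarrow> 0) at_top"
  proof (rule tendsto_sandwich[of "\<lambda>_. 0" V at_top "\<lambda>t. V a * exp (- (2 * c) * (t - a))"])
    show "\<forall>\<^sub>F t in at_top. V t \<le> V a * exp (- (2 * c) * (t - a))"
      using eventually_ge_at_top[of a] by eventually_elim (rule V_decay)
    show "((\<lambda>t. V a * exp (- (2 * c) * (t - a))) \<longlongrightarrow> 0) at_top"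
      using \<open>c > 0\<close> by real_asymp
  qed (simp_all add: V_def)
  then have "((\<lambda>t. sqrt (V t)) \<longlongrightarrow> sqrt 0) at_top"
    by (rule tendsto_real_sqrt)
  then have "((\<lambda>t. \<bar>q t - x\<bar>) \<longlongrightarrow> 0) at_top"
    by (simp add: V_def)
  then show ?thesis
    by (simp add: LIM_zero_iff tendsto_rabs_zero_iff)
qed

lemma monic_quadratic_factor_between:
  fixes b c u v :: real
  assumes "u < v" and pos: "u\<^sup>2 + b * u + c > 0" and neg: "v\<^sup>2 + b * v + c < 0"
  obtains r s where "u < r" "r < v" "v < s" "\<And>x. x\<^sup>2 + b * x + c = (x - r) * (x - s)"
proof -
  obtain r where r: "u \<le> r" "r \<le> v" "r\<^sup>2 + b * r + c = 0"
    using IVT2[of "\<lambda>x. x\<^sup>2 + b * x + c" v 0 u] \<open>u < v\<close> pos neg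
    by (force intro: continuous_intros)
  with pos neg have "u < r" "r < v" by (auto simp: order.order_iff_strict)
  define s where "s = - (r + b)"
  have factor: "x\<^sup>2 + b * x + c = (x - r) * (x - s)" for x
    using r(3) by (simp add: s_def algebra_simps power2_eq_square)
  have "(v - r) * (v - s) < 0" using neg unfolding factor .
  with \<open>r < v\<close> have "v < s" by (simp add: mult_less_0_iff)
  with \<open>u < r\<close> \<open>r < v\<close> factor show ?thesis by (intro that)
qed

definition two_level_poly :: "real \<Rightarrow> real \<Rightarrow> real \<Rightarrow> real" where
  "two_level_poly a b x = x\<^sup>2 + ((a ^ 3 + b ^ 3) / (a\<^sup>2 + b\<^sup>2) - 2 * (a + b)) * x + 2 * a * b"

lemma two_level_poly_signs:
  fixes a b :: real
  assumes "0 < b" "b < a"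
  shows "two_level_poly a b b > 0" and "two_level_poly a b a < 0" and "two_level_poly a b (2 * b) < 0"
proof -
  have sum_sq_pos: "a\<^sup>2 + b\<^sup>2 > 0" using assms by (simp add: add_pos_pos)
  then have "a * a + b * b \<noteq> 0" unfolding power2_eq_square by linarith
  then have "two_level_poly a b b = a\<^sup>2 * b * (a - b) / (a\<^sup>2 + b\<^sup>2)"
    and "two_level_poly a b a = - (a * b\<^sup>2 * (a - b) / (a\<^sup>2 + b\<^sup>2))"
    and "two_level_poly a b (2 * b) = - (2 * b ^ 3 * (a - b) / (a\<^sup>2 + b\<^sup>2))"
    by (simp_all add: two_level_poly_def field_simps power2_eq_square power3_eq_cube)
  with assms sum_sq_pos show "two_level_poly a b b > 0" and "two_level_poly a b a < 0"
    and "two_level_poly a b (2 * b) < 0" by simp_all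
qed

lemma orthogonal_matrix_of_orthonormal:
  fixes omega :: "'n::finite \<Rightarrow> real^'n"
  assumes "\<And>i j. omega i \<bullet> omega j = (if i = j then 1 else 0)"
  shows "orthogonal_matrix (\<chi> k i. omega i $ k)"
  using assms by (simp add: orthogonal_matrix_orthonormal_columns column_def norm_eq_1 orthogonal_def)

lemma trace_eq_sum_orthonormal:
  fixes omega :: "'n::finite \<Rightarrow> real^'n" and A :: "real^'n^'n"
  assumes "\<And>i j. omega i \<bullet> omega j = (if i = j then 1 else 0)"
  shows "trace A = (\<Sum>i\<in>UNIV. omega i \<bullet> (A *v omega i))"
proof -
  define Q :: "real^'n^'n" where "Q = (\<chi> k i. omega i $ k)"
  have "Q ** transpose Q = mat 1"
    using orthogonal_matrix_of_orthonormal[OF assms] by (simp add: Q_def orthogonal_matrix_def)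
  then have "trace A = trace ((A ** Q) ** transpose Q)"
    by (metis matrix_mul_assoc matrix_mul_rid)
  also have "\<dots> = trace (transpose Q ** (A ** Q))"
    by (rule trace_mul_sym)
  also have "\<dots> = (\<Sum>i\<in>UNIV. omega i \<bullet> (A *v omega i))"
    by (simp add: trace_def Q_def matrix_matrix_mult_def transpose_def inner_vec_def matrix_vector_mult_def)
  finally show ?thesis .
qed

lemma orthonormal_coordinate_nonzero:
  fixes omega :: "'n::finite \<Rightarrow> real^'n"
  assumes "\<And>i j. omega i \<bullet> omega j = (if i = j then 1 else 0)" and "x \<noteq> 0"
  obtains i where "x \<bullet> omega i \<noteq> 0"
proof -
  define Q :: "real^'n^'n" where "Q = (\<chi> k i. omega i $ k)"
  have "Q ** transpose Q = mat 1"
    using orthogonal_matrix_of_orthonormal[OF assms(1)] by (simp add: Q_def orthogonal_matrix_def)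
  then have "x = Q *v (transpose Q *v x)"
    by (metis matrix_vector_mul_assoc matrix_vector_mul_lid)
  moreover have "transpose Q *v x = (\<chi> i. x \<bullet> omega i)"
    by (simp add: vec_eq_iff Q_def transpose_def matrix_vector_mult_def inner_vec_def mult.commute)
  ultimately show ?thesis
    using that assms(2) by (metis matrix_vector_mult_0_right vec_lambda_unique zero_index)
qed

lemma eigenvalue_pos_if_posdef:
  fixes K :: "real^'n^'n"
  assumes posdef: "\<And>x. x \<noteq> 0 \<Longrightarrow> x \<bullet> (K *v x) > 0"
    and eig: "K *v v = \<mu> *\<^sub>R v" and "v \<noteq> 0"
  shows "\<mu> > 0"
proof -
  have "0 < v \<bullet> (K *v v)" using posdef \<open>v \<noteq> 0\<close> .
  also have "\<dots> = \<mu> * (v \<bullet> v)" by (simp add: eig)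
  finally have "0 < \<mu> * (v \<bullet> v)" .
  moreover have "0 < v \<bullet> v" using \<open>v \<noteq> 0\<close> by simp
  ultimately show ?thesis by (simp add: zero_less_mult_iff)
qed

lemma trace_square_eq_sum_eigenvalues_sq:
  fixes K :: "real^'n::finite^'n" and omega :: "'n \<Rightarrow> real^'n"
  assumes orthonormal: "\<And>i j. omega i \<bullet> omega j = (if i = j then 1 else 0)"
    and eig: "\<And>i. K *v omega i = lam i *\<^sub>R omega i"
  shows "trace (K ** K) = (\<Sum>i\<in>UNIV. (lam i)\<^sup>2)"
  unfolding trace_eq_sum_orthonormal[OF orthonormal]
  using orthonormal
  by (simp add: eig matrix_vector_mult_scaleR power2_eq_square flip: matrix_vector_mul_assoc)

definition spectral_moment :: "('n::finite \<Rightarrow> real) \<Rightarrow> ('n \<Rightarrow> real \<Rightarrow> real) \<Rightarrow> nat \<Rightarrow> real \<Rightarrow> real" where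
  "spectral_moment lam Dsq k t = (\<Sum>i\<in>UNIV. lam i ^ k * Dsq i t)"

lemma risk_de_eq_spectral_moment:
  fixes lam :: "'n::finite \<Rightarrow> real"
  shows "risk_de lam Dsq t = spectral_moment lam Dsq 1 t / (2 * real CARD('n))"
  by (simp add: risk_de_def spectral_moment_def)

lemma gamma_line_eq_moment_ratio:
  fixes lam :: "'n::finite \<Rightarrow> real"
  shows "gamma_line K lam Dsq t = real CARD('n) / trace (K ** K)
     * (spectral_moment lam Dsq 2 t / spectral_moment lam Dsq 1 t)"
  by (simp add: gamma_line_def risk_de_eq_spectral_moment spectral_moment_def)

locale line_search_dynamics =
  fixes K :: "real^'n^'n" and lam :: "'n::finite \<Rightarrow> real" and Dsq :: "'n \<Rightarrow> real \<Rightarrow> real"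
  assumes lam_pos: "\<And>i. lam i > 0"
    and trace_KK: "trace (K ** K) = (\<Sum>i\<in>UNIV. (lam i)\<^sup>2)"
    and D_nonneg: "\<And>i t. t \<ge> 0 \<Longrightarrow> Dsq i t \<ge> 0"
    and D_ode: "\<And>i t. t \<ge> 0 \<Longrightarrow>
        ((Dsq i) has_real_derivative
           (- 2 * gamma_line K lam Dsq t * lam i * Dsq i t
            + 2 * (gamma_line K lam Dsq t)\<^sup>2 * lam i * risk_de lam Dsq t))
        (at t within {0..})"
    and D_init_pos: "\<exists>i. Dsq i 0 > 0"
begin

abbreviation "M \<equiv> spectral_moment lam Dsq"
abbreviation "\<gamma> \<equiv> gamma_line K lam Dsq"
abbreviation "\<theta> \<equiv> real CARD('n) / trace (K ** K)"

lemma trace_KK_pos: "trace (K ** K) > 0"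
  unfolding trace_KK by (intro sum_pos) (simp_all add: less_imp_neq[OF lam_pos, symmetric])

lemma theta_pos: "\<theta> > 0"
  using trace_KK_pos by simp

lemma spectral_moment_nonneg: "t \<ge> 0 \<Longrightarrow> M k t \<ge> 0"
  unfolding spectral_moment_def using lam_pos D_nonneg by (intro sum_nonneg) (simp add: less_imp_le)

lemma spectral_moment_Suc_bounds:
  assumes "t \<ge> 0"
  shows "lambda_min lam * M k t \<le> M (Suc k) t" and "M (Suc k) t \<le> Max (range lam) * M k t"
proof -
  have weight_nonneg: "lam i ^ k * Dsq i t \<ge> 0" for i
    using lam_pos[of i] D_nonneg[OF assms, of i] by simp
  show "lambda_min lam * M k t \<le> M (Suc k) t"
    unfolding spectral_moment_def sum_distrib_left lambda_min_def
    by (intro sum_mono) (simp add: mult.assoc mult_right_mono weight_nonneg)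
  show "M (Suc k) t \<le> Max (range lam) * M k t"
    unfolding spectral_moment_def sum_distrib_left
    by (intro sum_mono) (simp add: mult.assoc mult_right_mono weight_nonneg)
qed

(* Used before m_1 > 0 is known; where m_1 t = 0, gamma^line t = 0 since x / 0 = 0. *)
lemma gamma_line_le:
  assumes "t \<ge> 0"
  shows "\<gamma> t \<le> \<theta> * Max (range lam)"
proof (cases "M 1 t = 0")
  case True
  have "Max (range lam) \<in> range lam" by (intro Max_in) auto
  then have "0 \<le> \<theta> * Max (range lam)"
    using theta_pos lam_pos by (auto simp only: zero_le_mult_iff less_imp_le)
  with True show ?thesis by (simp add: gamma_line_eq_moment_ratio)
next
  case False
  then have "M 1 t > 0" using spectral_moment_nonneg[OF assms, of 1] by simp
  then have "M 2 t / M 1 t \<le> Max (range lam)"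
    using spectral_moment_Suc_bounds(2)[OF assms, of 1] by (simp add: divide_le_eq numeral_2_eq_2)
  then show ?thesis
    unfolding gamma_line_eq_moment_ratio using less_imp_le[OF theta_pos] by (rule mult_left_mono)
qed

lemma Dsq_pos:
  assumes "Dsq i 0 > 0" and "t \<ge> 0"
  shows "Dsq i t > 0"
proof -
  define G where "G = \<theta> * Max (range lam)"
  have "Dsq i 0 * exp (- (2 * G * lam i) * (t - 0)) \<le> Dsq i t"
  proof (rule gronwall_lower_bound[where f' = "\<lambda>s. - 2 * \<gamma> s * lam i * Dsq i s
      + 2 * (\<gamma> s)\<^sup>2 * lam i * risk_de lam Dsq s", OF D_ode _ \<open>t \<ge> 0\<close>])
    fix s :: real assume s: "0 \<le> s"
    have "\<gamma> s * (lam i * Dsq i s) \<le> G * (lam i * Dsq i s)"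
      using gamma_line_le[OF s] lam_pos[of i] D_nonneg[OF s, of i]
      unfolding G_def by (intro mult_right_mono) auto
    moreover have "0 \<le> (\<gamma> s)\<^sup>2 * lam i * risk_de lam Dsq s"
      using lam_pos[of i] spectral_moment_nonneg[OF s, of 1] by (simp add: risk_de_eq_spectral_moment)
    ultimately show "- (2 * G * lam i) * Dsq i s
        \<le> - 2 * \<gamma> s * lam i * Dsq i s + 2 * (\<gamma> s)\<^sup>2 * lam i * risk_de lam Dsq s"
      by (simp add: algebra_simps)
  qed
  moreover have "0 < Dsq i 0 * exp (- (2 * G * lam i) * (t - 0))" using assms(1) by simp
  ultimately show ?thesis by linarith
qed

lemma spectral_moment_1_pos:
  assumes "t \<ge> 0"
  shows "M 1 t > 0"
proof -
  obtain i where "Dsq i 0 > 0" using D_init_pos ..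
  then have "0 < lam i * Dsq i t" using Dsq_pos[OF _ assms] lam_pos[of i] by simp
  also have "\<dots> \<le> M 1 t"
    unfolding spectral_moment_def power_one_right using lam_pos D_nonneg[OF assms]
    by (intro member_le_sum) (auto intro!: mult_nonneg_nonneg simp: less_imp_le)
  finally show ?thesis .
qed

lemma gamma_line_ge_lambda_min:
  assumes "t \<ge> 0"
  shows "lambda_min lam / (trace (K ** K) / real CARD('n)) \<le> \<gamma> t"
proof -
  have "lambda_min lam \<le> M 2 t / M 1 t"
    using spectral_moment_Suc_bounds(1)[OF assms, of 1] spectral_moment_1_pos[OF assms]
    by (simp add: le_divide_eq numeral_2_eq_2)
  then have "\<theta> * lambda_min lam \<le> \<gamma> t"
    unfolding gamma_line_eq_moment_ratio using less_imp_le[OF theta_pos] by (rule mult_left_mono)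
  then show ?thesis by (simp add: mult.commute)
qed

lemma spectral_moment_has_derivative:
  assumes "t \<ge> 0"
  shows "(M k has_real_derivative
      - 2 * \<gamma> t * M (Suc k) t + (\<gamma> t)\<^sup>2 * M 1 t * (\<Sum>i\<in>UNIV. lam i ^ Suc k) / real CARD('n))
    (at t within {0..})"
proof -
  have M_eq: "M k = (\<lambda>s. \<Sum>i\<in>UNIV. lam i ^ k * Dsq i s)"
    by (simp add: fun_eq_iff spectral_moment_def)
  have "(M k has_real_derivative (\<Sum>i\<in>UNIV. lam i ^ k *
      (- 2 * \<gamma> t * lam i * Dsq i t + 2 * (\<gamma> t)\<^sup>2 * lam i * risk_de lam Dsq t))) (at t within {0..})"
    unfolding M_eq by (intro DERIV_sum DERIV_cmult D_ode assms)
  also have "(\<Sum>i\<in>UNIV. lam i ^ k *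
      (- 2 * \<gamma> t * lam i * Dsq i t + 2 * (\<gamma> t)\<^sup>2 * lam i * risk_de lam Dsq t))
    = (\<Sum>i\<in>UNIV. - 2 * \<gamma> t * (lam i ^ Suc k * Dsq i t) + 2 * (\<gamma> t)\<^sup>2 * risk_de lam Dsq t * lam i ^ Suc k)"
    by (rule sum.cong) (simp_all add: algebra_simps)
  also have "\<dots> = - 2 * \<gamma> t * M (Suc k) t + 2 * (\<gamma> t)\<^sup>2 * risk_de lam Dsq t * (\<Sum>i\<in>UNIV. lam i ^ Suc k)"
    unfolding spectral_moment_def by (simp only: sum.distrib flip: sum_distrib_left)
  also have "\<dots> = - 2 * \<gamma> t * M (Suc k) t + (\<gamma> t)\<^sup>2 * M 1 t * (\<Sum>i\<in>UNIV. lam i ^ Suc k) / real CARD('n)"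
    by (simp add: risk_de_eq_spectral_moment)
  finally show ?thesis .
qed

lemma moment_ratio_has_derivative:
  assumes "t \<ge> 0"
  defines "q \<equiv> M 2 t / M 1 t"
  shows "((\<lambda>s. M 2 s / M 1 s) has_real_derivative
      \<theta> * q * (q\<^sup>2 + q * (\<Sum>i\<in>UNIV. lam i ^ 3) / trace (K ** K) - 2 * M 3 t / M 1 t))
    (at t within {0..})"
proof -
  have M1: "M 1 t \<noteq> 0" using spectral_moment_1_pos[OF assms(1)] by simp
  have T: "trace (K ** K) \<noteq> 0" using trace_KK_pos by simp
  have gamma: "\<gamma> t = \<theta> * q" unfolding q_def by (rule gamma_line_eq_moment_ratio)
  have "((\<lambda>s. M 2 s / M 1 s) has_real_derivative
      ((- 2 * \<gamma> t * M 3 t + (\<gamma> t)\<^sup>2 * M 1 t * (\<Sum>i\<in>UNIV. lam i ^ 3) / real CARD('n)) * M 1 t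
       - M 2 t * (- 2 * \<gamma> t * M 2 t + (\<gamma> t)\<^sup>2 * M 1 t * trace (K ** K) / real CARD('n)))
      / (M 1 t * M 1 t)) (at t within {0..})"
    using DERIV_divide[OF spectral_moment_has_derivative[OF assms(1), of 2]
        spectral_moment_has_derivative[OF assms(1), of 1] M1]
    by (simp add: trace_KK numeral_3_eq_3 numeral_2_eq_2)
  also have "((- 2 * \<gamma> t * M 3 t + (\<gamma> t)\<^sup>2 * M 1 t * (\<Sum>i\<in>UNIV. lam i ^ 3) / real CARD('n)) * M 1 t
       - M 2 t * (- 2 * \<gamma> t * M 2 t + (\<gamma> t)\<^sup>2 * M 1 t * trace (K ** K) / real CARD('n)))
      / (M 1 t * M 1 t)
    = \<theta> * q * (q\<^sup>2 + q * (\<Sum>i\<in>UNIV. lam i ^ 3) / trace (K ** K) - 2 * M 3 t / M 1 t)"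
    unfolding gamma q_def using M1 T by (simp add: field_simps power2_eq_square)
  finally show ?thesis .
qed

end

locale two_level_line_search = line_search_dynamics K lam Dsq
  for K :: "real^'n^'n" and lam :: "'n::finite \<Rightarrow> real" and Dsq :: "'n \<Rightarrow> real \<Rightarrow> real" +
  fixes a b :: real
  assumes b_pos: "0 < b" and b_less_a: "b < a"
    and lam_two_level: "\<And>i. lam i = a \<or> lam i = b"
    and half_a: "2 * card {i. lam i = a} = CARD('n)"
    and half_b: "2 * card {i. lam i = b} = CARD('n)"
begin

lemma sum_two_level: "(\<Sum>i\<in>UNIV. f (lam i)) = real CARD('n) / 2 * (f a + f b)"
proof -
  have "UNIV = {i. lam i = a} \<union> {i. lam i = b}" using lam_two_level by auto
  then have "(\<Sum>i\<in>UNIV. f (lam i)) = (\<Sum>i\<in>{i. lam i = a} \<union> {i. lam i = b}. f (lam i))"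
    by simp
  also have "\<dots> = (\<Sum>i\<in>{i. lam i = a}. f (lam i)) + (\<Sum>i\<in>{i. lam i = b}. f (lam i))"
    using b_less_a by (intro sum.union_disjoint) auto
  also have "\<dots> = real (card {i. lam i = a}) * f a + real (card {i. lam i = b}) * f b"
    by simp
  also have "\<dots> = real CARD('n) / 2 * (f a + f b)"
  proof -
    have "real (card {i. lam i = a}) = real CARD('n) / 2" by (simp flip: half_a)
    moreover have "real (card {i. lam i = b}) = real CARD('n) / 2" by (simp flip: half_b)
    ultimately show ?thesis by (simp add: algebra_simps)
  qed
  finally show ?thesis .
qed

lemma lambda_min_eq: "lambda_min lam = b"
proof -
  have "{i. lam i = b} \<noteq> {}"
  proof
    assume "{i. lam i = b} = {}"
    with half_b show False by simp
  qed
  then obtain j where "lam j = b" by auto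
  show ?thesis
    unfolding lambda_min_def
  proof (rule Min_eqI)
    show "b \<in> range lam" using \<open>lam j = b\<close> by (metis rangeI)
    fix y assume "y \<in> range lam"
    then obtain i where "y = lam i" by blast
    then show "b \<le> y" using lam_two_level[of i] b_less_a by auto
  qed simp
qed

lemma Max_range_eq: "Max (range lam) = a"
proof -
  have "{i. lam i = a} \<noteq> {}"
  proof
    assume "{i. lam i = a} = {}"
    with half_a show False by simp
  qed
  then obtain j where "lam j = a" by auto
  show ?thesis
  proof (rule Max_eqI)
    show "a \<in> range lam" using \<open>lam j = a\<close> by (metis rangeI)
    fix y assume "y \<in> range lam"
    then obtain i where "y = lam i" by blast
    then show "y \<le> a" using lam_two_level[of i] b_less_a by auto
  qed simp
qed

lemma spectral_moment_3_eq: "M 3 t = (a + b) * M 2 t - a * b * M 1 t"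
proof -
  have cube: "lam i ^ 3 * Dsq i t = (a + b) * (lam i ^ 2 * Dsq i t) - a * b * (lam i ^ 1 * Dsq i t)" for i
    using lam_two_level[of i] by (auto simp: power2_eq_square power3_eq_cube algebra_simps)
  show ?thesis
    unfolding spectral_moment_def cube by (simp add: sum_subtractf sum_distrib_left)
qed

lemma cube_sum_over_trace: "(\<Sum>i\<in>UNIV. lam i ^ 3) / trace (K ** K) = (a ^ 3 + b ^ 3) / (a\<^sup>2 + b\<^sup>2)"
  unfolding trace_KK sum_two_level[of "\<lambda>x. x ^ 3"] sum_two_level[of "\<lambda>x. x\<^sup>2"] by simp

lemma moment_ratio_bounds:
  assumes "t \<ge> 0"
  shows "b \<le> M 2 t / M 1 t" and "M 2 t / M 1 t \<le> a"
  using spectral_moment_Suc_bounds[OF assms, of 1] spectral_moment_1_pos[OF assms]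
  by (simp_all add: lambda_min_eq Max_range_eq divide_le_eq le_divide_eq numeral_2_eq_2)

lemma moment_ratio_two_level_has_derivative:
  assumes "t \<ge> 0"
  defines "q \<equiv> M 2 t / M 1 t"
  shows "((\<lambda>s. M 2 s / M 1 s) has_real_derivative \<theta> * q * two_level_poly a b q) (at t within {0..})"
proof -
  have "M 3 t / M 1 t = (a + b) * q - a * b"
    using spectral_moment_1_pos[OF assms(1)] by (simp add: spectral_moment_3_eq q_def field_simps)
  then have "q\<^sup>2 + q * (\<Sum>i\<in>UNIV. lam i ^ 3) / trace (K ** K) - 2 * M 3 t / M 1 t = two_level_poly a b q"
    unfolding times_divide_eq_right[symmetric] cube_sum_over_trace
    by (simp add: two_level_poly_def algebra_simps)
  then show ?thesis
    using moment_ratio_has_derivative[OF assms(1)] unfolding q_def by simp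
qed

lemma moment_ratio_tendsto:
  obtains r where "b < r" "r < 2 * b" "((\<lambda>t. M 2 t / M 1 t) \<longlongrightarrow> r) at_top"
proof -
  note signs = two_level_poly_signs[OF b_pos b_less_a, unfolded two_level_poly_def]
  obtain r s where r: "b < r" "r < a" "a < s"
    and factor: "\<And>x. two_level_poly a b x = (x - r) * (x - s)"
    using monic_quadratic_factor_between[OF b_less_a signs(1) signs(2)]
    unfolding two_level_poly_def by blast
  have "(2 * b - r) * (2 * b - s) < 0"
    using two_level_poly_signs(3)[OF b_pos b_less_a] unfolding factor .
  with r have "r < 2 * b" by (auto simp: mult_less_0_iff)
  define q where "q t = M 2 t / M 1 t" for t
  have contraction: "\<theta> * q t * (q t - s) \<le> - (\<theta> * b * (s - a))" if "t \<ge> 0" for t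
  proof -
    have "q t * (q t - s) \<le> b * (q t - s)"
      using moment_ratio_bounds[OF that] r unfolding q_def by (intro mult_right_mono_neg) auto
    also have "\<dots> \<le> b * (a - s)"
      using moment_ratio_bounds[OF that] b_pos unfolding q_def by (intro mult_left_mono) auto
    finally have "\<theta> * (q t * (q t - s)) \<le> \<theta> * (b * (a - s))"
      using less_imp_le[OF theta_pos] by (rule mult_left_mono)
    then show ?thesis by (metis mult.assoc minus_diff_eq mult_minus_right)
  qed
  have "\<theta> * b * (s - a) > 0"
    using theta_pos b_pos r by (intro mult_pos_pos) simp_all
  have "(q \<longlongrightarrow> r) at_top"
  proof (rule tendsto_of_DERIV_attracting[where F = "\<lambda>t. \<theta> * q t * (q t - s)" and a = 0])
    fix t :: real assume "0 \<le> t"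
    show "(q has_real_derivative \<theta> * q t * (q t - s) * (q t - r)) (at t within {0..})"
      using moment_ratio_two_level_has_derivative[OF \<open>0 \<le> t\<close>]
      unfolding factor q_def[abs_def] by (simp add: mult_ac)
    show "\<theta> * q t * (q t - s) \<le> - (\<theta> * b * (s - a))"
      by (rule contraction[OF \<open>0 \<le> t\<close>])
  qed fact
  with \<open>b < r\<close> \<open>r < 2 * b\<close> show ?thesis unfolding q_def[abs_def] by (rule that)
qed

lemma gamma_line_converges:
  "\<exists>L. (\<gamma> \<longlongrightarrow> L) at_top
     \<and> lambda_min lam / (trace (K ** K) / real CARD('n)) \<le> L
     \<and> L \<le> 2 * lambda_min lam / (trace (K ** K) / real CARD('n))"
proof -
  obtain r where r: "b < r" "r < 2 * b" and lim: "((\<lambda>t. M 2 t / M 1 t) \<longlongrightarrow> r) at_top"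
    by (rule moment_ratio_tendsto)
  have "(\<gamma> \<longlongrightarrow> \<theta> * r) at_top"
    unfolding gamma_line_eq_moment_ratio[abs_def] using lim by (rule tendsto_mult_left)
  moreover have "\<theta> * b \<le> \<theta> * r" "\<theta> * r \<le> \<theta> * (2 * b)"
    using r less_imp_le[OF theta_pos] by (simp_all only: mult_left_mono less_imp_le)
  ultimately show ?thesis
    unfolding lambda_min_eq by (intro exI[of _ "\<theta> * r"]) (simp add: field_simps)
qed

end

theorem proposition1:
  fixes K :: "real^'n^'n"
    and lam :: "'n \<Rightarrow> real"
    and omega :: "'n \<Rightarrow> real^'n"
    and X0 Xstar :: "real^'n"
    and Dsq :: "'n \<Rightarrow> real \<Rightarrow> real"
  assumes K_sym: "transpose K = K"
    and K_posdef: "\<And>x. x \<noteq> 0 \<Longrightarrow> x \<bullet> (K *v x) > 0"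
    and eig: "\<And>i. K *v omega i = lam i *\<^sub>R omega i"
    and orthonormal: "\<And>i j. omega i \<bullet> omega j = (if i = j then 1 else 0)"
    and X0_ne: "X0 \<noteq> Xstar"
    and D_nonneg: "\<And>i t. t \<ge> 0 \<Longrightarrow> Dsq i t \<ge> 0"
    and D_init: "\<And>i. Dsq i 0 = real CARD('n) * ((X0 - Xstar) \<bullet> omega i)\<^sup>2"
    and D_ode: "\<And>i t. t \<ge> 0 \<Longrightarrow>
        ((Dsq i) has_real_derivative
           (- 2 * gamma_line K lam Dsq t * lam i * Dsq i t
            + 2 * (gamma_line K lam Dsq t)\<^sup>2 * lam i * risk_de lam Dsq t))
        (at t within {0..})"
  shows "(\<forall>t\<ge>0. lambda_min lam / (trace (K ** K) / real CARD('n)) \<le> gamma_line K lam Dsq t)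
    \<and> ((\<exists>l1 l2. l1 > l2 \<and> l2 > 0 \<and> (\<forall>i. lam i = l1 \<or> lam i = l2)
          \<and> 2 * card {i. lam i = l1} = CARD('n) \<and> 2 * card {i. lam i = l2} = CARD('n))
       \<longrightarrow> (\<exists>L. (gamma_line K lam Dsq \<longlongrightarrow> L) at_top
             \<and> lambda_min lam / (trace (K ** K) / real CARD('n)) \<le> L
             \<and> L \<le> 2 * lambda_min lam / (trace (K ** K) / real CARD('n))))"
proof -
  have lam_pos: "lam i > 0" for i
  proof (rule eigenvalue_pos_if_posdef[OF K_posdef])
    show "K *v omega i = lam i *\<^sub>R omega i" by (rule eig)
    show "omega i \<noteq> 0" using orthonormal[of i i] by auto
  qed
  obtain i0 where "(X0 - Xstar) \<bullet> omega i0 \<noteq> 0"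
    using orthonormal_coordinate_nonzero[OF orthonormal] X0_ne by (metis right_minus_eq)
  then have "Dsq i0 0 > 0" by (simp add: D_init)
  then interpret line_search_dynamics K lam Dsq
    using lam_pos trace_square_eq_sum_eigenvalues_sq[OF orthonormal eig] D_nonneg D_ode
    by unfold_locales auto
  show ?thesis
  proof (intro conjI allI impI)
    show "lambda_min lam / (trace (K ** K) / real CARD('n)) \<le> gamma_line K lam Dsq t"
      if "t \<ge> 0" for t
      using that by (rule gamma_line_ge_lambda_min)
  next
    assume "\<exists>l1 l2. l1 > l2 \<and> l2 > 0 \<and> (\<forall>i. lam i = l1 \<or> lam i = l2)
          \<and> 2 * card {i. lam i = l1} = CARD('n) \<and> 2 * card {i. lam i = l2} = CARD('n)"
    then obtain l1 l2 where "l2 < l1" "0 < l2" "\<forall>i. lam i = l1 \<or> lam i = l2"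
      "2 * card {i. lam i = l1} = CARD('n)" "2 * card {i. lam i = l2} = CARD('n)"
      by blast
    then interpret two_level_line_search K lam Dsq l1 l2
      by unfold_locales auto
    show "\<exists>L. (gamma_line K lam Dsq \<longlongrightarrow> L) at_top
             \<and> lambda_min lam / (trace (K ** K) / real CARD('n)) \<le> L
             \<and> L \<le> 2 * lambda_min lam / (trace (K ** K) / real CARD('n))"
      by (rule gamma_line_converges)
  qed
qed

end
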